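(* Let $\eta>2$, $\bar\sigma_2^2>0$, $m>0$, $\theta>0$, $m_0=\lceil m\rceil$, $a_m=m\,\Gamma(1+m)^{-1/m}$, and for $k=1,\dots,m_0$ let $$H_k=\frac{4^{1/\eta}}{\sqrt\pi}\Gamma\!\left(1-\tfrac{2}{\eta}\right)\Gamma\!\left(\tfrac12+\tfrac{2}{\eta}\right)\left(\bar\sigma_2^2\frac{k a_m}{m\theta}\right)^{2/\eta}.$$ For $\Lambda>0$ define $$\bar R_{\mathrm{cell}}(\Lambda)=\sum_{k=1}^{m_0}(-1)^{k+1}\binom{m_0}{k}\int_0^{+\infty}\frac{1}{1+x}\cdot\frac{1}{\frac{1}{\Lambda}+H_k x^{2/\eta}}\,\mathrm{d}x.$$ Then, as $\Lambda\to\infty$, $$\bar R_{\mathrm{cell}}(\Lambda)\to\bar R_{\mathrm{cell},asy}=\frac{\pi}{\sin\!\left(\frac{2\pi}{\eta}\right)}\sum_{k=1}^{m_0}(-1)^{k+1}\binom{m_0}{k}\frac{1}{H_k}.$$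
   Context: $\Gamma$ is the Gamma function and $\lceil\cdot\rceil$ the ceiling. In the paper $\Lambda=\lambda_u/\lambda_b$ is the user-to-base-station density ratio, $\bar R_{\mathrm{cell}}$ is the (approximate) average sum-rate per cell of uplink CUMA, $\bar\sigma_2^2$ is a normalized interference variance, $m$ the Gamma shape parameter and $\theta=\theta_S(1)$ the Gamma scale parameter of the desired signal power at unit distance; for the claim these are arbitrary positive constants. *)

theory Defs
  imports "HOL-Analysis.Analysis"
begin

definition a_m :: "real \<Rightarrow> real" where
  "a_m m = m * Gamma (1 + m) powr (- 1 / m)"

definition H_k :: "real \<Rightarrow> real \<Rightarrow> real \<Rightarrow> real \<Rightarrow> nat \<Rightarrow> real" where
  "H_k \<eta> \<sigma>2 m \<theta> k =
     4 powr (1 / \<eta>) / sqrt pi * Gamma (1 - 2 / \<eta>) * Gamma (1 / 2 + 2 / \<eta>)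
     * (\<sigma>2 * (real k * a_m m) / (m * \<theta>)) powr (2 / \<eta>)"

definition R_cell :: "real \<Rightarrow> real \<Rightarrow> real \<Rightarrow> real \<Rightarrow> real \<Rightarrow> real" where
  "R_cell \<eta> \<sigma>2 m \<theta> \<Lambda> =
     (\<Sum>k=1..nat \<lceil>m\<rceil>. (-1) ^ (k + 1) * real (nat \<lceil>m\<rceil> choose k) *
        (LBINT x:{0<..}. 1 / (1 + x) * (1 / (1 / \<Lambda> + H_k \<eta> \<sigma>2 m \<theta> k * x powr (2 / \<eta>)))))"

definition R_cell_asy :: "real \<Rightarrow> real \<Rightarrow> real \<Rightarrow> real \<Rightarrow> real" where
  "R_cell_asy \<eta> \<sigma>2 m \<theta> =
     pi / sin (2 * pi / \<eta>) *
     (\<Sum>k=1..nat \<lceil>m\<rceil>. (-1) ^ (k + 1) * real (nat \<lceil>m\<rceil> choose k) * (1 / H_k \<eta> \<sigma>2 m \<theta> k))"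

end

(* For each k the integrand increases, as \<Lambda> \<rightarrow> \<infinity>, to x powr (-a) / (H_k (1 + x)) with a = 2/\<eta>,
   which therefore dominates it; by dominated convergence the k-th integral tends to
   H_k\<^sup>-\<^sup>1 \<integral>\<^sub>0\<^sup>\<infinity> x powr (-a) / (1 + x) dx. The substitution x = t / (1 - t) turns this into the
   Beta integral B(1 - a, a) = \<Gamma>(a) \<Gamma>(1 - a), which is \<pi> / sin (\<pi> a) by the reflection formula. *)
theory Submission
  imports Defs "HOL-Real_Asymp.Real_Asymp"
begin

lemma Gamma_reflection_real:
  fixes x :: real
  shows "Gamma x * Gamma (1 - x) = pi / sin (pi * x)"
proof -
  have "complex_of_real (Gamma x * Gamma (1 - x)) = Gamma (of_real x) * Gamma (1 - of_real x)"
    by (simp flip: Gamma_complex_of_real)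
  also have "\<dots> = of_real (pi / sin (pi * x))"
    by (simp add: Gamma_reflection_complex flip: sin_of_real)
  finally show ?thesis by (simp only: of_real_eq_iff)
qed

lemma tendsto_set_integral_divide_inverse_plus:
  fixes f g :: "real \<Rightarrow> real"
  assumes A: "A \<in> sets lborel"
    and meas: "f \<in> borel_measurable lborel" "g \<in> borel_measurable lborel"
    and integrable: "set_integrable lborel A (\<lambda>x. f x / g x)"
    and f_nonneg: "\<And>x. x \<in> A \<Longrightarrow> f x \<ge> 0" and g_pos: "\<And>x. x \<in> A \<Longrightarrow> g x > 0"
  shows "((\<lambda>L. LBINT x:A. f x / (1 / L + g x)) \<longlongrightarrow> (LBINT x:A. f x / g x)) at_top"
  unfolding set_lebesgue_integral_def
proof (rule integral_dominated_convergence_at_top[where w = "\<lambda>x. indicator A x *\<^sub>R (f x / g x)"])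
  show "integrable lborel (\<lambda>x. indicator A x *\<^sub>R (f x / g x))"
    using integrable by (simp add: set_integrable_def)
  show "AE x in lborel. ((\<lambda>L. indicator A x *\<^sub>R (f x / (1 / L + g x)))
          \<longlongrightarrow> indicator A x *\<^sub>R (f x / g x)) at_top"
  proof (rule AE_I2)
    fix x
    have "((\<lambda>L. f x / (1 / L + g x)) \<longlongrightarrow> f x / (0 + g x)) at_top" if "x \<in> A"
      using g_pos[OF that]
      by (intro tendsto_intros tendsto_divide_0[OF tendsto_const]
            filterlim_at_top_imp_at_infinity filterlim_ident) auto
    then show "((\<lambda>L. indicator A x *\<^sub>R (f x / (1 / L + g x)))
          \<longlongrightarrow> indicator A x *\<^sub>R (f x / g x)) at_top"
      by (cases "x \<in> A") auto
  qed
  show "\<forall>\<^sub>F L in at_top. AE x in lborel.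
          norm (indicator A x *\<^sub>R (f x / (1 / L + g x))) \<le> indicator A x *\<^sub>R (f x / g x)"
  proof (rule eventually_mono[OF eventually_gt_at_top[of 0]], rule AE_I2)
    fix L x :: real
    assume "L > 0"
    have "\<bar>f x / (1 / L + g x)\<bar> \<le> f x / g x" if "x \<in> A"
    proof -
      have "0 < g x" "0 < 1 / L + g x"
        using g_pos[OF that] \<open>L > 0\<close> by (simp_all add: add_pos_pos)
      then have "f x / (1 / L + g x) \<le> f x / g x"
        using f_nonneg[OF that] \<open>L > 0\<close> by (intro divide_left_mono) auto
      then show ?thesis
        using f_nonneg[OF that] \<open>0 < 1 / L + g x\<close> by simp
    qed
    then show "norm (indicator A x *\<^sub>R (f x / (1 / L + g x))) \<le> indicator A x *\<^sub>R (f x / g x)"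
      by (cases "x \<in> A") auto
  qed
next
  show "(\<lambda>x. indicator A x *\<^sub>R (f x / g x)) \<in> borel_measurable lborel"
    using A meas by measurable
next
  show "(\<lambda>x. indicator A x *\<^sub>R (f x / (1 / L + g x))) \<in> borel_measurable lborel" for L
    using A meas by measurable
qed

lemma set_integral_powr_divide_one_plus:
  fixes a :: real
  assumes a: "0 < a" "a < 1"
  shows "set_integrable lborel {0<..} (\<lambda>x. x powr (-a) / (1 + x))"
    and "(LBINT x:{0<..}. x powr (-a) / (1 + x)) = pi / sin (pi * a)"
proof -
  define f where "f = (\<lambda>x::real. x powr (-a) / (1 + x))"
  define g where "g = (\<lambda>t::real. t / (1 - t))"
  define g' where "g' = (\<lambda>t::real. 1 / (1 - t)\<^sup>2)"
  define B where "B = (\<lambda>t::real. t powr ((1 - a) - 1) * (1 - t) powr (a - 1))"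
  have subst_eq: "f (g t) * g' t = B t" if "t \<in> {0<..<1}" for t
  proof -
    from that have t: "0 < t" "t < 1" by auto
    have "g t powr (-a) = t powr (-a) * (1 - t) powr a"
      using t by (simp add: g_def powr_divide powr_minus field_simps)
    moreover have "1 + g t = 1 / (1 - t)"
      using t by (simp add: g_def field_simps)
    ultimately have "f (g t) * g' t = t powr (-a) * (1 - t) powr a * (1 - t) / (1 - t)\<^sup>2"
      by (simp add: f_def g'_def)
    also have "\<dots> = t powr (-a) * ((1 - t) powr a / (1 - t))"
      using t by (simp add: power2_eq_square)
    also have "\<dots> = B t"
      using t by (simp add: B_def powr_diff)
    finally show ?thesis .
  qed
  have B_integrable: "set_integrable lborel {0<..<1} B"
    unfolding B_def by (rule set_integrable_subset[OF integrable_Beta]) (use a in auto)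
  have unit_interval: "einterval 0 1 = {0<..<1::real}"
    by (auto simp: einterval_def zero_ereal_def one_ereal_def)
  have "set_integrable lborel {0<..<1} (\<lambda>t. f (g t) * g' t) = set_integrable lborel {0<..<1} B"
    by (rule set_integrable_cong) (simp_all add: subst_eq)
  then have fg_integrable: "set_integrable lborel (einterval 0 1) (\<lambda>t. f (g t) * g' t)"
    unfolding unit_interval using B_integrable by simp
  have g_lim_0: "((ereal \<circ> g \<circ> real_of_ereal) \<longlongrightarrow> 0) (at_right 0)"
    and g_lim_1: "((ereal \<circ> g \<circ> real_of_ereal) \<longlongrightarrow> \<infinity>) (at_left 1)"
    unfolding comp_assoc[symmetric] ereal_tendsto_simps1 ereal_tendsto_simps2 g_def
      zero_ereal_def one_ereal_def
    by real_asymp+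
  have substitution_conditions:
    "DERIV g t :> g' t" "isCont f (g t)" "isCont g' t" "0 \<le> f (g t)"
    if "0 < ereal t" "ereal t < 1" for t
  proof -
    from that have t: "0 < t" "t < 1" by auto
    then show "DERIV g t :> g' t"
      unfolding g_def g'_def
      by (auto intro!: derivative_eq_intros simp: field_simps power2_eq_square)
    from t show "isCont f (g t)" "isCont g' t" "0 \<le> f (g t)"
      unfolding f_def g_def g'_def by (auto intro!: continuous_intros simp: field_simps)
  qed
  have "0 \<le> g' t" for t
    by (simp add: g'_def)
  note substitution = interval_integral_substitution_nonneg
    [OF _ substitution_conditions this g_lim_0 g_lim_1 fg_integrable, simplified]
  have half_line: "einterval 0 \<infinity> = {0::real<..}"
    by (auto simp: einterval_def zero_ereal_def)
  show "set_integrable lborel {0<..} (\<lambda>x. x powr (-a) / (1 + x))"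
    using substitution(1) by (simp add: half_line f_def)
  have "(LBINT x:{0<..}. x powr (-a) / (1 + x)) = (LBINT x=0..\<infinity>. f x)"
    by (simp add: interval_lebesgue_integral_def half_line f_def)
  also have "\<dots> = (LBINT t:{0<..<1}. f (g t) * g' t)"
    using substitution(2) by (simp add: interval_lebesgue_integral_def unit_interval)
  also have "\<dots> = (LBINT t:{0<..<1}. B t)"
    by (rule set_lebesgue_integral_cong) (simp_all add: subst_eq)
  also have "\<dots> = (LBINT t:{0..1}. B t)"
    using interval_integral_Icc[of 0 1] by (simp add: interval_lebesgue_integral_def)
  also have "\<dots> = integral {0..1} B"
    unfolding B_def by (rule set_borel_integral_eq_integral(2)[OF integrable_Beta]) (use a in auto)
  also have "\<dots> = Beta (1 - a) a"
    using has_integral_Beta_real[of "1 - a" a] a by (simp add: B_def integral_unique)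
  also have "\<dots> = pi / sin (pi * a)"
    using Gamma_reflection_real[of a] by (simp add: Beta_def mult.commute)
  finally show "(LBINT x:{0<..}. x powr (-a) / (1 + x)) = pi / sin (pi * a)" .
qed

lemma tendsto_integral_inverse_one_plus_powr:
  fixes a H :: real
  assumes a: "0 < a" "a < 1" and H: "H > 0"
  shows "((\<lambda>L. LBINT x:{0<..}. 1 / (1 + x) * (1 / (1 / L + H * x powr a)))
          \<longlongrightarrow> pi / sin (pi * a) * (1 / H)) at_top"
proof -
  have rescale: "x powr (-a) / (1 + x) / H = 1 / (1 + x) / (H * x powr a)" if "x \<in> {0<..}" for x
    using that H by (simp add: powr_minus field_simps)
  have "set_integrable lborel {0<..} (\<lambda>x. x powr (-a) / (1 + x) / H)"
    using set_integral_powr_divide_one_plus(1)[OF a] by (rule set_integrable_divide)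
  moreover have "set_integrable lborel {0<..} (\<lambda>x. x powr (-a) / (1 + x) / H)
      = set_integrable lborel {0<..} (\<lambda>x. 1 / (1 + x) / (H * x powr a))"
    by (rule set_integrable_cong) (simp_all only: rescale)
  ultimately have "set_integrable lborel {0<..} (\<lambda>x. 1 / (1 + x) / (H * x powr a))"
    by simp
  then have "((\<lambda>L. LBINT x:{0<..}. 1 / (1 + x) / (1 / L + H * x powr a))
          \<longlongrightarrow> (LBINT x:{0<..}. 1 / (1 + x) / (H * x powr a))) at_top"
    using H by (intro tendsto_set_integral_divide_inverse_plus) auto
  moreover have "(LBINT x:{0<..}. 1 / (1 + x) / (H * x powr a)) = pi / sin (pi * a) * (1 / H)"
  proof -
    have "(LBINT x:{0<..}. 1 / (1 + x) / (H * x powr a)) = (LBINT x:{0<..}. x powr (-a) / (1 + x) / H)"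
      by (rule set_lebesgue_integral_cong) (use rescale in auto)
    also have "\<dots> = (LBINT x:{0<..}. x powr (-a) / (1 + x)) / H"
      by (rule set_integral_divide_zero)
    finally show ?thesis
      by (simp add: set_integral_powr_divide_one_plus(2)[OF a])
  qed
  ultimately show ?thesis
    by simp
qed

lemma a_m_pos:
  assumes "m > 0"
  shows "a_m m > 0"
proof -
  have "Gamma (1 + m) > 0"
    using assms by simp
  then have "Gamma (1 + m) \<noteq> 0"
    by linarith
  then show ?thesis
    unfolding a_m_def using assms by (intro mult_pos_pos) auto
qed

lemma H_k_pos:
  assumes "\<eta> > 2" and "\<sigma>2 > 0" and "m > 0" and "\<theta> > 0" and "k \<ge> 1"
  shows "H_k \<eta> \<sigma>2 m \<theta> k > 0"
proof -
  have "Gamma (1 - 2 / \<eta>) > 0" "Gamma (1 / 2 + 2 / \<eta>) > 0"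
    using assms(1) by (auto intro!: Gamma_real_pos simp: field_simps)
  moreover have "\<sigma>2 * (real k * a_m m) / (m * \<theta>) > 0"
    using assms a_m_pos[of m] by simp
  ultimately show ?thesis
    unfolding H_k_def using assms(5) by (intro mult_pos_pos divide_pos_pos) auto
qed

theorem corollary1:
  fixes \<eta> \<sigma>2 m \<theta> :: real
  assumes "\<eta> > 2" and "\<sigma>2 > 0" and "m > 0" and "\<theta> > 0"
  shows "((\<lambda>\<Lambda>. R_cell \<eta> \<sigma>2 m \<theta> \<Lambda>) \<longlongrightarrow> R_cell_asy \<eta> \<sigma>2 m \<theta>) at_top"
proof -
  have exponent: "0 < 2 / \<eta>" "2 / \<eta> < 1"
    using assms(1) by (auto simp: field_simps)
  have asy: "R_cell_asy \<eta> \<sigma>2 m \<theta> = (\<Sum>k=1..nat \<lceil>m\<rceil>. (-1) ^ (k + 1) * real (nat \<lceil>m\<rceil> choose k) *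
        (pi / sin (pi * (2 / \<eta>)) * (1 / H_k \<eta> \<sigma>2 m \<theta> k)))"
    unfolding R_cell_asy_def sum_distrib_left by (intro sum.cong) (auto simp: mult_ac)
  show ?thesis
    unfolding R_cell_def asy
    by (intro tendsto_sum tendsto_mult_left tendsto_integral_inverse_one_plus_powr
        exponent H_k_pos assms) auto
qed

end
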